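(* Let $G\ge 1$ and $B\ge 1$ be integers, and let $Z\in\{-1,+1\}^{G\times B}$ be a design matrix whose rows correspond to $G$ GEOs (regions) and whose columns correspond to $B$ brands, where $Z_{gb}=+1$ means that brand $b$ receives the treatment (T) in GEO $g$ and $Z_{gb}=-1$ means it receives the control (C). Suppose that each GEO has the treatment for exactly half of the brands (every row of $Z$ contains exactly $B/2$ entries equal to $+1$) and each brand is in the treatment group for exactly half of the GEOs (every column of $Z$ contains exactly $G/2$ entries equal to $+1$). Then it is impossible that simultaneously: (i) for every pair of distinct brands $b\ne b'$, each of the four combinations $(Z_{gb},Z_{gb'})\in\{TT,TC,CT,CC\}$ occurs for the same number of GEOs $g$; and (ii) for every pair of distinct GEOs $g\ne g'$, each of the four combinations $(Z_{gb},Z_{g'b})\in\{TT,TC,CT,CC\}$ occurs for the same number of brands $b$.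
   Context: T denotes the treatment level ($+1$) and C the control level ($-1$); for a pair of brands $b,b'$ the combination at GEO $g$ is the pair of levels $(Z_{gb},Z_{gb'})$, and analogously for a pair of GEOs. *)

theory Defs
  imports Main
begin

text \<open>A design matrix Z is a function on indices g < G (GEOs) and b < B (brands)
 with values in {-1,+1}; +1 is treatment T, -1 is control C.\<close>

definition combos_balanced_brands :: "nat \<Rightarrow> nat \<Rightarrow> (nat \<Rightarrow> nat \<Rightarrow> int) \<Rightarrow> bool" where
  "combos_balanced_brands G B Z \<longleftrightarrow>
     (\<forall>b<B. \<forall>b'<B. b \<noteq> b' \<longrightarrow>
        (\<forall>s\<in>{-1,1}. \<forall>t\<in>{-1,1}. \<forall>s'\<in>{-1,1}. \<forall>t'\<in>{-1,1}.
           card {g. g < G \<and> Z g b = s \<and> Z g b' = t} =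
           card {g. g < G \<and> Z g b = s' \<and> Z g b' = t'}))"

definition combos_balanced_geos :: "nat \<Rightarrow> nat \<Rightarrow> (nat \<Rightarrow> nat \<Rightarrow> int) \<Rightarrow> bool" where
  "combos_balanced_geos G B Z \<longleftrightarrow>
     (\<forall>g<G. \<forall>g'<G. g \<noteq> g' \<longrightarrow>
        (\<forall>s\<in>{-1,1}. \<forall>t\<in>{-1,1}. \<forall>s'\<in>{-1,1}. \<forall>t'\<in>{-1,1}.
           card {b. b < B \<and> Z g b = s \<and> Z g' b = t} =
           card {b. b < B \<and> Z g b = s' \<and> Z g' b = t'}))"

end

theory Submission
  imports Defs
begin

text \<open>Balance of every pair of GEOs makes the rows of \<open>Z\<close> pairwise orthogonal, since the
  inner product of two sign vectors counts agreements minus disagreements; balance of every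
  brand makes every column sum vanish. Summing the inner products of the first row with all
  rows therefore gives \<open>0\<close>, while only the first row itself contributes, namely \<open>B\<close>.\<close>

lemma int_card_lessThan_eq_sum_of_bool:
  fixes n :: nat
  shows "int (card {i. i < n \<and> P i}) = (\<Sum>i<n. of_bool (P i))"
proof -
  have "(\<Sum>i<n. of_bool (P i)) = int (card ({..<n} \<inter> {i. P i}))"
    by (rule sum_of_bool_eq) simp_all
  moreover have "{..<n} \<inter> {i. P i} = {i. i < n \<and> P i}" by auto
  ultimately show ?thesis by simp
qed

lemma sum_sign_vector_eq_zero:
  fixes v :: "nat \<Rightarrow> int"
  assumes signs: "\<forall>i<n. v i \<in> {-1, 1}"
    and half: "2 * card {i. i < n \<and> v i = 1} = n"
  shows "(\<Sum>i<n. v i) = 0"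
proof -
  have "(\<Sum>i<n. v i) = (\<Sum>i<n. 2 * of_bool (v i = 1) - 1)"
    by (rule sum.cong) (use signs in auto)
  also have "\<dots> = 2 * int (card {i. i < n \<and> v i = 1}) - int n"
    by (simp add: sum_subtractf sum_distrib_left[symmetric] int_card_lessThan_eq_sum_of_bool)
  also have "\<dots> = 0"
    using arg_cong[OF half, of int] by simp
  finally show ?thesis .
qed

lemma inner_sign_vectors_eq_card_combos:
  fixes u w :: "nat \<Rightarrow> int"
  assumes "\<forall>i<n. u i \<in> {-1, 1}" and "\<forall>i<n. w i \<in> {-1, 1}"
  shows "(\<Sum>i<n. u i * w i) =
      int (card {i. i < n \<and> u i = 1 \<and> w i = 1}) - int (card {i. i < n \<and> u i = 1 \<and> w i = -1})
    - int (card {i. i < n \<and> u i = -1 \<and> w i = 1}) + int (card {i. i < n \<and> u i = -1 \<and> w i = -1})"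
proof -
  have "(\<Sum>i<n. u i * w i) = (\<Sum>i<n. of_bool (u i = 1 \<and> w i = 1) - of_bool (u i = 1 \<and> w i = -1)
      - of_bool (u i = -1 \<and> w i = 1) + of_bool (u i = -1 \<and> w i = -1))"
    by (rule sum.cong) (use assms in auto)
  then show ?thesis
    by (simp only: int_card_lessThan_eq_sum_of_bool sum_subtractf sum.distrib)
qed

lemma combos_balanced_geos_rows_orthogonal:
  assumes "combos_balanced_geos G B Z"
    and "\<forall>g<G. \<forall>b<B. Z g b \<in> {-1, 1}"
    and "g < G" "g' < G" "g \<noteq> g'"
  shows "(\<Sum>b<B. Z g b * Z g' b) = 0"
proof -
  have equal: "card {b. b < B \<and> Z g b = s \<and> Z g' b = t} = card {b. b < B \<and> Z g b = s' \<and> Z g' b = t'}"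
    if "s \<in> {-1, 1}" "t \<in> {-1, 1}" "s' \<in> {-1, 1}" "t' \<in> {-1, 1}" for s t s' t'
    using assms that unfolding combos_balanced_geos_def by blast
  show ?thesis
    using assms(2-4) equal[of 1 1 1 "-1"] equal[of 1 1 "-1" 1] equal[of 1 1 "-1" "-1"]
    by (simp add: inner_sign_vectors_eq_card_combos)
qed

lemma sign_matrix_orthogonal_rows_column_sum_nonzero:
  fixes Z :: "nat \<Rightarrow> nat \<Rightarrow> int"
  assumes "G \<ge> 1" and "B \<ge> 1"
    and signs: "\<forall>g<G. \<forall>b<B. Z g b \<in> {-1, 1}"
    and orthogonal: "\<forall>g<G. g \<noteq> 0 \<longrightarrow> (\<Sum>b<B. Z 0 b * Z g b) = 0"
  shows "\<exists>b<B. (\<Sum>g<G. Z g b) \<noteq> 0"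
proof (rule ccontr)
  assume "\<not> ?thesis"
  then have "(\<Sum>b<B. Z 0 b * (\<Sum>g<G. Z g b)) = 0" by simp
  moreover have "(\<Sum>b<B. Z 0 b * (\<Sum>g<G. Z g b)) = (\<Sum>g<G. \<Sum>b<B. Z 0 b * Z g b)"
    by (simp add: sum_distrib_left sum.swap[of _ "{..<G}"])
  moreover have "\<dots> = (\<Sum>b<B. Z 0 b * Z 0 b)"
    using \<open>G \<ge> 1\<close> orthogonal by (simp add: sum.remove[of "{..<G}" 0])
  moreover have "\<dots> = (\<Sum>b<B. 1)"
  proof (rule sum.cong)
    fix b assume "b \<in> {..<B}"
    then have "Z 0 b \<in> {-1, 1}" using \<open>G \<ge> 1\<close> signs by simp
    then show "Z 0 b * Z 0 b = 1" by auto
  qed simp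
  ultimately show False using \<open>B \<ge> 1\<close> by simp
qed

theorem theorem1:
  fixes G B :: nat and Z :: "nat \<Rightarrow> nat \<Rightarrow> int"
  assumes "G \<ge> 1" and "B \<ge> 1"
    and entries: "\<forall>g<G. \<forall>b<B. Z g b \<in> {-1, 1}"
    and rows: "\<forall>g<G. 2 * card {b. b < B \<and> Z g b = 1} = B"
    and cols: "\<forall>b<B. 2 * card {g. g < G \<and> Z g b = 1} = G"
  shows "\<not> (combos_balanced_brands G B Z \<and> combos_balanced_geos G B Z)"
proof
  assume "combos_balanced_brands G B Z \<and> combos_balanced_geos G B Z"
  then have "\<forall>g<G. g \<noteq> 0 \<longrightarrow> (\<Sum>b<B. Z 0 b * Z g b) = 0"
    using \<open>G \<ge> 1\<close> entries combos_balanced_geos_rows_orthogonal[of G B Z 0] by simp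
  then obtain b where "b < B" "(\<Sum>g<G. Z g b) \<noteq> 0"
    using sign_matrix_orthogonal_rows_column_sum_nonzero assms(1,2) entries by blast
  moreover have "(\<Sum>g<G. Z g b) = 0" if "b < B" for b
    using sum_sign_vector_eq_zero[of G "\<lambda>g. Z g b"] entries cols that by simp
  ultimately show False by blast
qed

end
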